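(* Let $G$ be a finite group such that the identity element is the only vertex of the power graph $\mathscr{G}(G)$ adjacent to all other vertices. Then $\mathscr{G}(G)$ is not overfull.
   Context: For a finite group $G$, the power graph $\mathscr{G}(G)$ is the simple graph with vertex set the elements of $G$, in which two distinct elements $a,b$ are adjacent if and only if one is a power of the other. For a finite simple graph $\Gamma$ on $n$ vertices with maximum vertex degree $\Delta(\Gamma)$, $\Gamma$ is called overfull if $|E(\Gamma)| / \lfloor n/2 \rfloor > \Delta(\Gamma)$. *)

theory Defs
  imports Complex_Main "HOL-Algebra.Group"
begin

text \<open>Adjacency in the power graph: distinct elements, one a (natural) power of the other.
  In a finite group, integer powers coincide with natural powers.\<close>
definition pg_adj :: "('a, 'b) monoid_scheme \<Rightarrow> 'a \<Rightarrow> 'a \<Rightarrow> bool" where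
  "pg_adj G a b \<longleftrightarrow> a \<in> carrier G \<and> b \<in> carrier G \<and> a \<noteq> b \<and>
     ((\<exists>k::nat. a = b [^]\<^bsub>G\<^esub> k) \<or> (\<exists>k::nat. b = a [^]\<^bsub>G\<^esub> k))"

definition pg_edges :: "('a, 'b) monoid_scheme \<Rightarrow> 'a set set" where
  "pg_edges G = {{a, b} | a b. pg_adj G a b}"

definition pg_degree :: "('a, 'b) monoid_scheme \<Rightarrow> 'a \<Rightarrow> nat" where
  "pg_degree G v = card {w \<in> carrier G. pg_adj G v w}"

definition pg_max_degree :: "('a, 'b) monoid_scheme \<Rightarrow> nat" where
  "pg_max_degree G = Max (pg_degree G ` carrier G)"

definition pg_overfull :: "('a, 'b) monoid_scheme \<Rightarrow> bool" where
  "pg_overfull G \<longleftrightarrow>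
     real (card (pg_edges G)) / real (card (carrier G) div 2) > real (pg_max_degree G)"

definition pg_dominating :: "('a, 'b) monoid_scheme \<Rightarrow> 'a set" where
  "pg_dominating G = {v \<in> carrier G. \<forall>w \<in> carrier G. w \<noteq> v \<longrightarrow> pg_adj G v w}"

end

theory Submission
  imports Defs
begin

text \<open>Only the graph structure of the power graph matters: counting adjacent ordered pairs,
  the unique dominating vertex has degree \<open>n - 1\<close> and every other vertex has degree at most
  \<open>n - 2\<close>, so \<open>2 |E| \<le> (n - 1) + (n - 1)(n - 2) = (n - 1)\<^sup>2\<close>.  Since \<open>n - 1 \<le> 2 \<lfloor>n/2\<rfloor>\<close>,
  this gives \<open>|E| \<le> (n - 1) \<lfloor>n/2\<rfloor> = \<Delta> \<lfloor>n/2\<rfloor>\<close>.\<close>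

lemma card_pairs_eq_twice_card_doubletons:
  fixes E :: "'a \<Rightarrow> 'a \<Rightarrow> bool"
  assumes fin: "finite {(a, b). E a b}" and "symp E" and "irreflp E"
  shows "card {(a, b). E a b} = 2 * card {{a, b} | a b. E a b}"
proof -
  let ?P = "{(a, b). E a b}" and ?edge = "\<lambda>(a, b). {a, b}"
  have edges: "?edge ` ?P = {{a, b} | a b. E a b}" by auto
  have fibre: "card {p \<in> ?P. ?edge p = e} = 2" if "e \<in> ?edge ` ?P" for e
  proof -
    obtain x y where "E x y" and e: "e = {x, y}" using \<open>e \<in> ?edge ` ?P\<close> by auto
    then have "x \<noteq> y" "E y x"
      using \<open>irreflp E\<close> \<open>symp E\<close> by (auto dest: irreflpD sympD)
    with \<open>E x y\<close> have "{p \<in> ?P. ?edge p = e} = {(x, y), (y, x)}"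
      by (auto simp: e doubleton_eq_iff)
    with \<open>x \<noteq> y\<close> show ?thesis by simp
  qed
  have "card ?P = (\<Sum>e \<in> ?edge ` ?P. card {p \<in> ?P. ?edge p = e})"
    unfolding card_eq_sum by (rule sum.image_gen[OF fin])
  also have "\<dots> = 2 * card {{a, b} | a b. E a b}"
    using fibre by (simp add: edges)
  finally show ?thesis .
qed

lemma handshake:
  fixes E :: "'a \<Rightarrow> 'a \<Rightarrow> bool"
  assumes "finite V" and "\<And>a b. E a b \<Longrightarrow> a \<in> V \<and> b \<in> V" and "symp E" and "irreflp E"
  shows "2 * card {{a, b} | a b. E a b} = (\<Sum>v\<in>V. card {w \<in> V. E v w})"
proof -
  have pairs: "{(a, b). E a b} = Sigma V (\<lambda>v. {w \<in> V. E v w})"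
    using assms(2) by auto
  then have "finite {(a, b). E a b}" using \<open>finite V\<close> by simp
  then show ?thesis
    using card_pairs_eq_twice_card_doubletons[OF _ \<open>symp E\<close> \<open>irreflp E\<close>] pairs \<open>finite V\<close>
    by simp
qed

lemma pg_handshake:
  assumes "finite (carrier G)"
  shows "2 * card (pg_edges G) = (\<Sum>v\<in>carrier G. pg_degree G v)"
  unfolding pg_edges_def pg_degree_def
  by (rule handshake[OF assms]) (auto simp: pg_adj_def intro: sympI irreflpI)

lemma pg_degree_dominating:
  assumes "finite (carrier G)" and "v \<in> pg_dominating G"
  shows "pg_degree G v = card (carrier G) - 1"
proof -
  have "{w \<in> carrier G. pg_adj G v w} = carrier G - {v}"
    using assms(2) by (auto simp: pg_dominating_def pg_adj_def)
  with assms show ?thesis by (simp add: pg_degree_def pg_dominating_def)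
qed

lemma pg_degree_not_dominating:
  assumes "finite (carrier G)" and "v \<in> carrier G" and "v \<notin> pg_dominating G"
  shows "pg_degree G v \<le> card (carrier G) - 2"
proof -
  obtain w where w: "w \<in> carrier G" "w \<noteq> v" "\<not> pg_adj G v w"
    using assms(2,3) by (auto simp: pg_dominating_def)
  then have "{w \<in> carrier G. pg_adj G v w} \<subseteq> carrier G - {v, w}"
    by (auto simp: pg_adj_def)
  then have "pg_degree G v \<le> card (carrier G - {v, w})"
    unfolding pg_degree_def using assms(1) by (simp add: card_mono)
  also have "\<dots> = card (carrier G) - 2"
    using assms(1,2) w by (simp add: card_Diff_subset)
  finally show ?thesis .
qed

lemma pg_degree_le_max_degree:
  assumes "finite (carrier G)" and "v \<in> carrier G"
  shows "pg_degree G v \<le> pg_max_degree G"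
  unfolding pg_max_degree_def using assms by simp

lemma card_pg_edges_bound_unique_dominating:
  assumes fin: "finite (carrier G)" and dom: "pg_dominating G = {u}"
  shows "2 * card (pg_edges G) \<le> (card (carrier G) - 1)\<^sup>2"
proof -
  let ?n = "card (carrier G)"
  have u: "u \<in> carrier G" using dom by (auto simp: pg_dominating_def)
  then obtain m where m: "?n = Suc m" using fin by (cases ?n) auto
  have "2 * card (pg_edges G) = pg_degree G u + (\<Sum>v\<in>carrier G - {u}. pg_degree G v)"
    using pg_handshake[OF fin] u fin by (simp add: sum.remove)
  also have "\<dots> \<le> (?n - 1) + (\<Sum>v\<in>carrier G - {u}. ?n - 2)"
    using pg_degree_dominating[OF fin, of u] pg_degree_not_dominating[OF fin] dom
    by (intro add_mono sum_mono) auto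
  also have "\<dots> = (?n - 1) + (?n - 1) * (?n - 2)"
    using u fin by simp
  also have "\<dots> = (?n - 1)\<^sup>2"
    unfolding m by (cases m) (simp_all add: power2_eq_square)
  finally show ?thesis .
qed

lemma not_pg_overfull_if_card_edges_le:
  assumes "card (pg_edges G) \<le> pg_max_degree G * (card (carrier G) div 2)"
  shows "\<not> pg_overfull G"
proof -
  have "real (card (pg_edges G)) \<le> real (pg_max_degree G) * real (card (carrier G) div 2)"
    using assms of_nat_mono by fastforce
  then show ?thesis
    by (cases "card (carrier G) div 2 = 0") (simp_all add: pg_overfull_def divide_le_eq not_less)
qed

lemma not_pg_overfull_unique_dominating:
  assumes fin: "finite (carrier G)" and dom: "pg_dominating G = {u}"
  shows "\<not> pg_overfull G"
proof (rule not_pg_overfull_if_card_edges_le)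
  let ?n = "card (carrier G)"
  have u: "u \<in> carrier G" "u \<in> pg_dominating G" using dom by (auto simp: pg_dominating_def)
  have max_degree: "?n - 1 \<le> pg_max_degree G"
    using pg_degree_le_max_degree[OF fin u(1)] pg_degree_dominating[OF fin u(2)] by simp
  have "2 * card (pg_edges G) \<le> (?n - 1) * (?n - 1)"
    using card_pg_edges_bound_unique_dominating[OF assms] by (simp add: power2_eq_square)
  also have "\<dots> \<le> (?n - 1) * (2 * (?n div 2))"
    by (intro mult_le_mono2) auto
  finally have "card (pg_edges G) \<le> (?n - 1) * (?n div 2)" by simp
  also have "\<dots> \<le> pg_max_degree G * (?n div 2)"
    using max_degree by (rule mult_le_mono1)
  finally show "card (pg_edges G) \<le> pg_max_degree G * (?n div 2)" .
qed

theorem mainTheorem5: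
  fixes G :: "('a, 'b) monoid_scheme"
  assumes "group G"
    and "finite (carrier G)"
    and "pg_dominating G = {\<one>\<^bsub>G\<^esub>}"
  shows "\<not> pg_overfull G"
  using not_pg_overfull_unique_dominating[OF assms(2,3)] .

end
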